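(* Let $\Gamma$ be the subgroup of $\mathrm{Isom}(\mathbb{R}^2)$, identifying $\mathbb{R}^2\cong\mathbb{C}$, consisting of all translations $z\mapsto z+a$ and all $180^\circ$ rotations $z\mapsto -z+2a$ ($a\in\mathbb{C}$). Then, with $2$ colors, $\mathrm{ext}_D(\mathbb{R}^2,\Gamma)=4$.
   Context: Let a group $\Gamma$ act faithfully on a set $X$. A coloring $c:X\to\{R,B\}$ is $\Gamma$-distinguishing if the only $\gamma\in\Gamma$ with $c\circ\gamma=c$ is the identity. For $W\subset X$ whose pointwise stabilizer in $\Gamma$ is trivial, the property $P(W)$ holds if every precoloring $c:X\setminus W\to\{R,B\}$ can be extended to a $\Gamma$-distinguishing coloring $X\to\{R,B\}$. The distinguishing extension number $\mathrm{ext}_D(X,\Gamma)$ is the smallest $m$ such that every $W\subset X$ with $|W|\geq m$ and trivial pointwise stabilizer satisfies $P(W)$ ($\infty$ if none exists). *)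

theory Defs
  imports Complex_Main "HOL-Library.Extended_Nat"
begin

text \<open>A group acting faithfully on a set X is represented by a set G of
 bijections of the type 'a (X = UNIV). Colorings with two colours R, B are
 functions 'a \<Rightarrow> bool (True = R, False = B).\<close>

definition distinguishing :: "('a \<Rightarrow> 'a) set \<Rightarrow> ('a \<Rightarrow> bool) \<Rightarrow> bool" where
  "distinguishing G c \<longleftrightarrow> (\<forall>g\<in>G. c \<circ> g = c \<longrightarrow> g = id)"

definition trivial_pointwise_stabilizer :: "('a \<Rightarrow> 'a) set \<Rightarrow> 'a set \<Rightarrow> bool" where
  "trivial_pointwise_stabilizer G W \<longleftrightarrow> (\<forall>g\<in>G. (\<forall>w\<in>W. g w = w) \<longrightarrow> g = id)"

text \<open>P(W): every precoloring of X - W (only the values outside W matter)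
 extends to a distinguishing coloring.\<close>
definition prop_P :: "('a \<Rightarrow> 'a) set \<Rightarrow> 'a set \<Rightarrow> bool" where
  "prop_P G W \<longleftrightarrow> (\<forall>c::'a \<Rightarrow> bool. \<exists>c'. (\<forall>x. x \<notin> W \<longrightarrow> c' x = c x) \<and> distinguishing G c')"

definition card_ge :: "'a set \<Rightarrow> nat \<Rightarrow> bool" where
  "card_ge W m \<longleftrightarrow> infinite W \<or> card W \<ge> m"

definition ext_good :: "('a \<Rightarrow> 'a) set \<Rightarrow> nat \<Rightarrow> bool" where
  "ext_good G m \<longleftrightarrow> (\<forall>W. card_ge W m \<and> trivial_pointwise_stabilizer G W \<longrightarrow> prop_P G W)"

definition ext_D :: "('a \<Rightarrow> 'a) set \<Rightarrow> enat" where
  "ext_D G = (if \<exists>m. ext_good G m then enat (LEAST m. ext_good G m) else \<infinity>)"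

definition Gamma_tr_rot :: "(complex \<Rightarrow> complex) set" where
  "Gamma_tr_rot = {(\<lambda>z. z + a) | a. True} \<union> {(\<lambda>z. - z + 2 * a) | a. True}"

end

theory Submission
  imports Defs "HOL-Library.Product_Lexorder"
begin

(* Lower bound: the three points -1, 0, 1 have trivial pointwise stabiliser, but every
   colouring that is constant outside them is preserved by a translation or a half-turn,
   because every subset of {-1, 0, 1} is centrally symmetric.

   Upper bound: let F be a set of at least four points and suppose no recolouring c' of F
   (keeping the precolouring c outside F) is distinguishing.  For a direction w, the jump set
   of c' is the set of points where c' differs from its translate by w.  First one finds
   w \<noteq> 0 whose jump sets are finite (from a translation symmetry, or by comparing the
   centres of two half-turn symmetries).  A finite jump set of a colouring with a non-trivial
   symmetry in \<Gamma> is centrally symmetric.  Ordering the plane lexicographically along w, the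
   centre of a finite symmetric set is the midpoint of its two extreme points, so recolourings
   that fix the jumps at the extremes of F all have the same centre z0.  Toggling the colour of
   one inner point r of F changes the jump set by {r, r + w}, which forces 2 z0 = 2 r + w; two
   different inner points then give a contradiction. *)

(* Lexicographic key of a point along the direction w: first the component along w, then the
   component orthogonal to it. *)
definition dir_key :: "complex \<Rightarrow> complex \<Rightarrow> real \<times> real" where
  "dir_key w x = (Re (cnj w * x), Im (cnj w * x))"

lemma dir_key_inj:
  assumes "w \<noteq> 0" and "dir_key w x = dir_key w y"
  shows "x = y"
proof -
  have "cnj w * x = cnj w * y"
    using assms(2) by (simp add: dir_key_def complex_eq_iff)
  then show ?thesis using assms(1) by simp
qed

lemma dir_key_opposite: "dir_key (- w) x \<le> dir_key (- w) y \<longleftrightarrow> dir_key w y \<le> dir_key w x"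
  by (auto simp: dir_key_def)

lemma dir_key_opposite_less: "dir_key (- w) x < dir_key (- w) y \<longleftrightarrow> dir_key w y < dir_key w x"
  by (simp add: dir_key_opposite less_le_not_le)

lemma dir_key_reflect: "dir_key w (c - x) \<le> dir_key w (c - y) \<longleftrightarrow> dir_key w y \<le> dir_key w x"
  by (auto simp: dir_key_def right_diff_distrib)

lemma dir_key_shift: "dir_key w (x + c) < dir_key w (y + c) \<longleftrightarrow> dir_key w x < dir_key w y"
  by (auto simp: dir_key_def distrib_left)

lemma dir_key_shift_le: "dir_key w (x + c) \<le> dir_key w (y + c) \<longleftrightarrow> dir_key w x \<le> dir_key w y"
  by (auto simp: dir_key_def distrib_left)

lemma dir_key_step:
  assumes "w \<noteq> 0" shows "dir_key w x < dir_key w (x + w)"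
proof -
  have "Re (cnj w * w) = (Re w)\<^sup>2 + (Im w)\<^sup>2" by (simp add: power2_eq_square)
  also have "\<dots> > 0" using assms by (simp add: complex_eq_iff sum_power2_gt_zero_iff)
  finally show ?thesis by (simp add: dir_key_def distrib_left)
qed

definition sym_about :: "complex \<Rightarrow> complex set \<Rightarrow> bool" where
  "sym_about z X \<longleftrightarrow> (\<forall>x. 2 * z - x \<in> X \<longleftrightarrow> x \<in> X)"

definition extreme_in :: "complex \<Rightarrow> complex set \<Rightarrow> complex \<Rightarrow> bool" where
  "extreme_in w X M \<longleftrightarrow> M \<in> X \<and> (\<forall>y\<in>X. dir_key w y \<le> dir_key w M)"

lemma extreme_exists:
  assumes "finite X" and "X \<noteq> {}"
  obtains M where "extreme_in w X M"
proof -
  have "Max (dir_key w ` X) \<in> dir_key w ` X"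
    using assms by simp
  then obtain M where "M \<in> X" and "dir_key w M = Max (dir_key w ` X)"
    by auto
  then have "extreme_in w X M"
    using assms(1) by (simp add: extreme_in_def)
  then show ?thesis by (rule that)
qed

lemma center_of_extremes:
  assumes "w \<noteq> 0" and sym: "sym_about z X"
    and M: "extreme_in w X M" and m: "extreme_in (- w) X m"
  shows "2 * z = M + m"
proof -
  have "2 * z - m \<in> X" and "2 * z - M \<in> X"
    using sym M m by (auto simp: sym_about_def extreme_in_def)
  then have "dir_key w (2 * z - m) \<le> dir_key w M"
    and "dir_key w m \<le> dir_key w (2 * z - M)"
    using M m by (auto simp: extreme_in_def dir_key_opposite)
  moreover from calculation(2) have "dir_key w (2 * z - (2 * z - M)) \<le> dir_key w (2 * z - m)"
    by (simp only: dir_key_reflect)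
  ultimately have "dir_key w (2 * z - m) = dir_key w M"
    by simp
  then have "2 * z - m = M"
    by (rule dir_key_inj[OF assms(1)])
  then show ?thesis by (simp add: algebra_simps)
qed

lemma extreme_agree:
  assumes "w \<noteq> 0" and "b \<in> X" and "b \<in> Y"
    and agree: "\<And>x. dir_key w b < dir_key w x \<Longrightarrow> x \<in> X \<longleftrightarrow> x \<in> Y"
    and M: "extreme_in w X M" and M': "extreme_in w Y M'"
  shows "M = M'"
proof -
  have mem: "N \<in> B" if "extreme_in w A N" "b \<in> A" "b \<in> B"
      "\<And>x. dir_key w b < dir_key w x \<Longrightarrow> x \<in> A \<longleftrightarrow> x \<in> B" for A B N
  proof (cases "N = b")
    case False
    have "dir_key w b \<le> dir_key w N"
      using that(1,2) by (simp add: extreme_in_def)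
    moreover have "dir_key w b \<noteq> dir_key w N"
      using False dir_key_inj[OF assms(1)] by metis
    ultimately have "dir_key w b < dir_key w N" by simp
    then show ?thesis using that(1,4) by (simp add: extreme_in_def)
  qed (use that in simp)
  have "M' \<in> X"
    using mem[OF M' \<open>b \<in> Y\<close> \<open>b \<in> X\<close>] agree by blast
  moreover have "M \<in> Y"
    using mem[OF M \<open>b \<in> X\<close> \<open>b \<in> Y\<close>] agree by blast
  ultimately have "dir_key w M = dir_key w M'"
    using M M' by (simp add: extreme_in_def order_antisym)
  then show ?thesis by (rule dir_key_inj[OF assms(1)])
qed

lemma center_unique:
  assumes "w \<noteq> 0" and "finite X" and "finite Y"
    and "sym_about z X" and "sym_about z' Y"
    and "a \<in> X" "a \<in> Y" "b \<in> X" "b \<in> Y"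
    and agree: "\<And>x. dir_key w x < dir_key w a \<or> dir_key w b < dir_key w x \<Longrightarrow> x \<in> X \<longleftrightarrow> x \<in> Y"
  shows "z = z'"
proof -
  have "X \<noteq> {}" "Y \<noteq> {}" using assms(6,7) by auto
  then obtain M m M' m' where
    "extreme_in w X M" "extreme_in (- w) X m" "extreme_in w Y M'" "extreme_in (- w) Y m'"
    using extreme_exists assms(2,3) by metis
  moreover from calculation have "M = M'"
    using extreme_agree[OF assms(1) assms(8,9)] agree by blast
  moreover from calculation have "m = m'"
    using extreme_agree[of "- w" a X Y] assms(1,6,7) agree by (simp add: dir_key_opposite_less)
  ultimately have "2 * z = 2 * z'"
    using center_of_extremes assms(1,4,5) by metis
  then show ?thesis by simp
qed

lemma extreme_bounds:
  assumes "extreme_in (- w) F a" and "extreme_in w F b" and "y \<in> F"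
  shows "dir_key w a \<le> dir_key w y" and "dir_key w y \<le> dir_key w b"
  using assms by (simp_all add: extreme_in_def dir_key_opposite)

lemma dir_key_window:
  assumes "w \<noteq> 0" and a: "extreme_in (- w) F a" and b: "extreme_in w F b"
    and x: "dir_key w x < dir_key w a \<or> dir_key w (b + w) < dir_key w x"
  shows "x \<notin> F \<and> x - w \<notin> F"
proof -
  note low = extreme_bounds(1)[OF a b] and high = extreme_bounds(2)[OF a b]
  have step: "dir_key w y < dir_key w (y + w)" for y
    using dir_key_step[OF assms(1)] .
  from x show ?thesis
  proof
    assume "dir_key w x < dir_key w a"
    moreover have "dir_key w (x - w) < dir_key w x"
      using step[of "x - w"] by simp
    ultimately show ?thesis using low by (meson order.strict_trans not_le)
  next
    assume bx: "dir_key w (b + w) < dir_key w x"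
    then have "dir_key w b < dir_key w x"
      using step[of b] by simp
    moreover have "dir_key w b < dir_key w (x - w)"
      using bx dir_key_shift[of w b w "x - w"] by simp
    ultimately show ?thesis using high by (meson not_le)
  qed
qed

definition rotation :: "complex \<Rightarrow> complex \<Rightarrow> complex" where
  "rotation m = (\<lambda>z. - z + 2 * m)"

lemma rotation_in_Gamma: "rotation z \<in> Gamma_tr_rot"
  by (auto simp: Gamma_tr_rot_def rotation_def)

lemma rotation_not_id: "rotation z \<noteq> id"
proof
  assume "rotation z = id"
  then have "rotation z (z + 1) = z + 1"
    by simp
  then show False
    by (simp add: rotation_def algebra_simps)
qed

lemma symmetry_cases:
  assumes "\<not> distinguishing Gamma_tr_rot c"
  obtains a where "a \<noteq> 0" and "c \<circ> (\<lambda>z. z + a) = c"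
  | m where "c \<circ> rotation m = c"
proof -
  obtain g where g: "g \<in> Gamma_tr_rot" "c \<circ> g = c" "g \<noteq> id"
    using assms by (auto simp: distinguishing_def)
  from g(1) consider a where "g = (\<lambda>z. z + a)" | m where "g = rotation m"
    by (auto simp: Gamma_tr_rot_def rotation_def)
  then show ?thesis
  proof cases
    case (1 a)
    then have "a \<noteq> 0" using g(3) by (auto simp: fun_eq_iff)
    then show ?thesis using that(1) g(2) 1 by blast
  qed (use that(2) g(2) in blast)
qed

definition jump :: "(complex \<Rightarrow> bool) \<Rightarrow> complex \<Rightarrow> complex set" where
  "jump c w = {x. c x \<noteq> c (x - w)}"

lemma finite_translation_invariant_empty:
  fixes A :: "complex set"
  assumes "a \<noteq> 0" and "finite A" and inv: "\<And>x. x \<in> A \<Longrightarrow> x + a \<in> A"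
  shows "A = {}"
proof
  show "A \<subseteq> {}"
  proof
    fix x assume "x \<in> A"
    then have "x + of_nat k * a \<in> A" for k
      by (induction k) (auto simp: algebra_simps dest: inv)
    then have "range (\<lambda>k::nat. x + of_nat k * a) \<subseteq> A" by blast
    moreover have "inj (\<lambda>k::nat. x + of_nat k * a)"
      using assms(1) by (auto intro: injI)
    ultimately have "finite (UNIV :: nat set)"
      using assms(2) finite_subset finite_imageD by blast
    then show "x \<in> {}" by simp
  qed
qed simp

(* A finite jump set of a colouring with a non-trivial symmetry is centrally symmetric:
   it is empty for a translation, and symmetric about m + w/2 for the half-turn about m. *)
lemma jump_symmetric:
  assumes "\<not> distinguishing Gamma_tr_rot c" and "finite (jump c w)"
  obtains z where "sym_about z (jump c w)"
  using assms(1)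
proof (cases rule: symmetry_cases)
  case (1 a)
  have shift: "c (x + a) = c x" for x
    using fun_cong[OF 1(2), of x] by simp
  moreover have "c (x + a - w) = c (x - w)" for x
    using shift[of "x - w"] by (simp add: diff_add_eq)
  ultimately have "x + a \<in> jump c w" if "x \<in> jump c w" for x
    using that by (simp add: jump_def)
  then have "jump c w = {}"
    using finite_translation_invariant_empty[OF 1(1) assms(2)] by blast
  then show ?thesis using that by (simp add: sym_about_def)
next
  case (2 m)
  have rot: "c (2 * m - x) = c x" for x
    using fun_cong[OF 2, of x] by (simp add: rotation_def)
  have "2 * (m + w / 2) - x = 2 * m - (x - w)" and "2 * (m + w / 2) - x - w = 2 * m - x" for x
    by (simp_all add: algebra_simps)
  then have "2 * (m + w / 2) - x \<in> jump c w \<longleftrightarrow> x \<in> jump c w" for x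
    by (simp only: jump_def mem_Collect_eq rot) blast
  then have "sym_about (m + w / 2) (jump c w)"
    unfolding sym_about_def by blast
  then show ?thesis by (rule that)
qed

lemma jump_toggle:
  "x \<in> jump (c(p := \<not> c p)) w \<longleftrightarrow> ((x \<in> jump c w) \<noteq> ((x = p) \<noteq> (x - w = p)))"
  by (auto simp: jump_def)

lemma toggle_center:
  assumes "w \<noteq> 0" and "sym_about z X" and "sym_about z Y"
    and toggle: "\<And>x. x \<in> Y \<longleftrightarrow> ((x \<in> X) \<noteq> ((x = p) \<noteq> (x - w = p)))"
  shows "2 * z = 2 * p + w"
proof -
  have flip: "((x \<in> Y) \<noteq> (x \<in> X)) \<longleftrightarrow> ((x = p) \<noteq> (x - w = p))" for x
    using toggle by blast
  have moved: "(2 * z - x = p) \<noteq> (2 * z - x - w = p)" if "(x = p) \<noteq> (x - w = p)" for x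
    using that flip[of x] flip[of "2 * z - x"] assms(2,3) by (simp add: sym_about_def)
  define u where "u = 2 * z - 2 * p"
  have "(u = 0) \<noteq> (u = w)"
    using moved[of p] assms(1) by (auto simp: u_def algebra_simps)
  moreover have "(u = w) \<noteq> (u = 2 * w)"
    using moved[of "p + w"] assms(1) by (auto simp: u_def algebra_simps)
  ultimately have "u = w"
    using assms(1) by auto
  then show ?thesis by (simp add: u_def algebra_simps)
qed

lemma jump_agree_outside:
  assumes "\<forall>y. y \<notin> F \<longrightarrow> c' y = c y" and "x \<notin> F" and "x - w \<notin> F"
  shows "x \<in> jump c' w \<longleftrightarrow> x \<in> jump c w"
  using assms by (simp add: jump_def)

lemma finite_jump_transfer:
  assumes "finite F" and agree: "\<forall>y. y \<notin> F \<longrightarrow> c' y = c y" and "finite (jump c w)"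
  shows "finite (jump c' w)"
proof (rule finite_subset)
  show "jump c' w \<subseteq> jump c w \<union> F \<union> (\<lambda>y. y + w) ` F"
  proof
    fix x assume x: "x \<in> jump c' w"
    show "x \<in> jump c w \<union> F \<union> (\<lambda>y. y + w) ` F"
    proof (cases "x \<in> F \<or> x - w \<in> F")
      case True
      moreover have "x = (x - w) + w" by simp
      ultimately show ?thesis by blast
    next
      case False
      then show ?thesis using x jump_agree_outside[OF agree] by blast
    qed
  qed
  show "finite (jump c w \<union> F \<union> (\<lambda>y. y + w) ` F)"
    using assms(1,3) by simp
qed

lemma rotation_toggle:
  assumes rot: "c \<circ> rotation m = c"
    and rot': "c(p := \<not> c p) \<circ> rotation n = c(p := \<not> c p)"
  shows "p = m \<or> (n \<noteq> m \<and> jump c (2 * (n - m)) \<subseteq> {p, 2 * n - p})"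
proof (cases "n = m")
  case True
  have "(c(p := \<not> c p)) (2 * m - p) = (\<not> c p)" and "c (2 * m - p) = c p"
    using fun_cong[OF rot', of p] fun_cong[OF rot, of p] True by (simp_all add: rotation_def)
  then have "2 * m - p = p"
    by (metis fun_upd_other)
  then show ?thesis by simp
next
  case False
  let ?c' = "c(p := \<not> c p)"
  have "x \<in> {p, 2 * n - p}" if x: "x \<in> jump c (2 * (n - m))" for x
  proof (rule ccontr)
    assume out: "x \<notin> {p, 2 * n - p}"
    have "c (x - 2 * (n - m)) = c (2 * n - x)"
      using fun_cong[OF rot, of "x - 2 * (n - m)"] by (simp add: rotation_def algebra_simps)
    also have "\<dots> = ?c' (2 * n - x)"
      using out by auto
    also have "\<dots> = ?c' x"
      using fun_cong[OF rot', of x] by (simp add: rotation_def algebra_simps)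
    also have "\<dots> = c x"
      using out by auto
    finally show False
      using x by (simp add: jump_def)
  qed
  then show ?thesis using False by blast
qed

lemma finite_jump_direction:
  assumes "finite F" and "p1 \<in> F" and "p2 \<in> F" and "p1 \<noteq> p2"
    and rigid: "\<And>c'. \<forall>x. x \<notin> F \<longrightarrow> c' x = c x \<Longrightarrow> \<not> distinguishing Gamma_tr_rot c'"
  obtains w where "w \<noteq> 0" and "finite (jump c w)"
proof (cases "\<exists>c' a. (\<forall>x. x \<notin> F \<longrightarrow> c' x = c x) \<and> a \<noteq> 0 \<and> c' \<circ> (\<lambda>z. z + a) = c'")
  case True
  then obtain c' a where agree: "\<forall>x. x \<notin> F \<longrightarrow> c' x = c x"
    and "a \<noteq> 0" and shift: "c' \<circ> (\<lambda>z. z + a) = c'"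
    by blast
  have "c' x = c' (x - a)" for x
    using fun_cong[OF shift, of "x - a"] by simp
  then have "jump c' a = {}"
    by (simp add: jump_def)
  then have "finite (jump c a)"
    using finite_jump_transfer[OF assms(1), of c c' a] agree by simp
  then show ?thesis using that \<open>a \<noteq> 0\<close> by blast
next
  case False
  have rot: "\<exists>m. c' \<circ> rotation m = c'" if "\<forall>x. x \<notin> F \<longrightarrow> c' x = c x" for c'
    using rigid[OF that]
  proof (cases rule: symmetry_cases)
    case (1 a)
    then show ?thesis using False that by blast
  qed blast
  obtain m where m: "c \<circ> rotation m = c"
    using rot by blast
  have direction: "\<exists>w. w \<noteq> 0 \<and> finite (jump c w)" if "p \<in> F" and "p \<noteq> m" for p
  proof -
    have "\<forall>x. x \<notin> F \<longrightarrow> (c(p := \<not> c p)) x = c x"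
      using \<open>p \<in> F\<close> by auto
    then obtain n where "c(p := \<not> c p) \<circ> rotation n = c(p := \<not> c p)"
      using rot by blast
    then have "n \<noteq> m" and "jump c (2 * (n - m)) \<subseteq> {p, 2 * n - p}"
      using rotation_toggle[OF m] \<open>p \<noteq> m\<close> by blast+
    then show ?thesis
      using finite_subset by (intro exI[of _ "2 * (n - m)"]) auto
  qed
  obtain p where "p \<in> F" and "p \<noteq> m"
    using assms(2-4) by blast
  then show ?thesis
    using direction that by blast
qed

lemma toggle_center_in_window:
  fixes c :: "complex \<Rightarrow> bool" and r :: complex
  defines "c' \<equiv> c(r := \<not> c r)"
  assumes "w \<noteq> 0" and "finite (jump c w)" and "finite (jump c' w)"
    and "sym_about z (jump c w)" and "sym_about z' (jump c' w)"
    and "a \<in> jump c w" "a \<in> jump c' w" "b \<in> jump c w" "b \<in> jump c' w"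
    and "dir_key w a \<le> dir_key w r" and "dir_key w (r + w) \<le> dir_key w b"
  shows "2 * z = 2 * r + w"
proof -
  have "x \<in> jump c w \<longleftrightarrow> x \<in> jump c' w"
    if "dir_key w x < dir_key w a \<or> dir_key w b < dir_key w x" for x
  proof -
    have "dir_key w r < dir_key w (r + w)"
      by (rule dir_key_step[OF assms(2)])
    then have "x \<noteq> r" and "x \<noteq> r + w"
      using that assms(11,12) by auto
    then show ?thesis
      unfolding c'_def jump_toggle by auto
  qed
  then have "z = z'"
    using center_unique[OF assms(2-10)] by blast
  then show ?thesis
    using toggle_center[OF assms(2,5)] assms(6) jump_toggle unfolding c'_def by blast
qed

lemma two_distinct_elements:
  assumes "2 \<le> card S"
  obtains p q where "p \<in> S" and "q \<in> S" and "p \<noteq> q"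
proof -
  obtain T where "T \<subseteq> S" and "card T = 2"
    using obtain_subset_with_card_n[OF assms] by blast
  then show ?thesis
    using that by (auto simp: card_2_iff)
qed

context
  fixes F :: "complex set" and c :: "complex \<Rightarrow> bool" and w a b :: complex
  assumes large: "4 \<le> card F"
    and rigid: "\<And>c'. \<forall>x. x \<notin> F \<longrightarrow> c' x = c x \<Longrightarrow> \<not> distinguishing Gamma_tr_rot c'"
    and w: "w \<noteq> 0" and finite_jump: "finite (jump c w)"
    and a: "extreme_in (- w) F a" and b: "extreme_in w F b"
begin

lemma rigid_finite: "finite F"
  using large card.infinite by force

lemma rigid_jump_symmetric:
  assumes "\<forall>x. x \<notin> F \<longrightarrow> c' x = c x"
  shows "finite (jump c' w)" and "\<exists>z. sym_about z (jump c' w)"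
proof -
  show fin: "finite (jump c' w)"
    using finite_jump_transfer[OF rigid_finite assms finite_jump] .
  show "\<exists>z. sym_about z (jump c' w)"
    using jump_symmetric[OF rigid[OF assms] fin] by blast
qed

lemma rigid_extremes_distinct: "a \<noteq> b"
proof
  assume "a = b"
  then have "dir_key w y = dir_key w a" if "y \<in> F" for y
    using extreme_bounds[OF a b that] by simp
  then have "F \<subseteq> {a}"
    using dir_key_inj[OF w] by blast
  then have "card F \<le> 1"
    using card_mono[of "{a}" F] by simp
  with large show False by simp
qed

(* Colouring a and b opposite to their outer neighbours a - w and b + w (which lie outside F)
   puts a and b + w into the jump set. *)
lemma rigid_witnesses:
  assumes "\<forall>x. x \<notin> F \<longrightarrow> c' x = c x" and "c' a = (\<not> c (a - w))" and "c' b = (\<not> c (b + w))"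
  shows "a \<in> jump c' w" and "b + w \<in> jump c' w"
proof -
  have "dir_key w (a - w) < dir_key w a"
    using dir_key_step[OF w, of "a - w"] by simp
  then have "a - w \<notin> F"
    using dir_key_window[OF w a b] by blast
  moreover have "dir_key w (b + w) < dir_key w (b + w + w)"
    by (rule dir_key_step[OF w])
  then have "b + w + w - w \<notin> F"
    using dir_key_window[OF w a b] by blast
  then have "b + w \<notin> F"
    by (metis add_diff_cancel)
  ultimately have "c' (a - w) = c (a - w)" and "c' (b + w) = c (b + w)"
    using assms(1) by blast+
  then show "a \<in> jump c' w" and "b + w \<in> jump c' w"
    using assms(2,3) by (simp_all add: jump_def)
qed

lemma rigid_center_pinned:
  assumes adm: "\<forall>x. x \<notin> F \<longrightarrow> c0 x = c x" and c0_ab: "c0 a = (\<not> c (a - w))" "c0 b = (\<not> c (b + w))"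
    and z0: "sym_about z0 (jump c0 w)" and r: "r \<in> F - {a, b}"
  shows "2 * z0 = 2 * r + w"
proof -
  let ?c = "c0(r := \<not> c0 r)"
  have adm': "\<forall>x. x \<notin> F \<longrightarrow> ?c x = c x"
    using adm r by auto
  have c_ab: "?c a = (\<not> c (a - w))" "?c b = (\<not> c (b + w))"
    using c0_ab r by auto
  obtain z where z: "sym_about z (jump ?c w)"
    using rigid_jump_symmetric(2)[OF adm'] by blast
  have "dir_key w (r + w) \<le> dir_key w (b + w)"
    using extreme_bounds(2)[OF a b] r by (simp add: dir_key_shift_le)
  then show ?thesis
    using toggle_center_in_window[OF w rigid_jump_symmetric(1)[OF adm] rigid_jump_symmetric(1)[OF adm'] z0 z]
      rigid_witnesses[OF adm c0_ab] rigid_witnesses[OF adm' c_ab] extreme_bounds(1)[OF a b] r by blast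
qed

lemma rigid_configuration_impossible: False
proof -
  have "a \<in> F" and "b \<in> F"
    using a b by (simp_all add: extreme_in_def)
  define c0 where "c0 = c(a := \<not> c (a - w), b := \<not> c (b + w))"
  have adm: "\<forall>x. x \<notin> F \<longrightarrow> c0 x = c x"
    using \<open>a \<in> F\<close> \<open>b \<in> F\<close> by (simp add: c0_def)
  have c0_ab: "c0 a = (\<not> c (a - w))" "c0 b = (\<not> c (b + w))"
    using rigid_extremes_distinct by (simp_all add: c0_def)
  obtain z0 where z0: "sym_about z0 (jump c0 w)"
    using rigid_jump_symmetric(2)[OF adm] by blast
  have "2 \<le> card (F - {a, b})"
    using rigid_finite large \<open>a \<in> F\<close> \<open>b \<in> F\<close> rigid_extremes_distinct
    by (simp add: card_Diff_subset)
  then obtain p q where "p \<in> F - {a, b}" and "q \<in> F - {a, b}" and "p \<noteq> q"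
    by (rule two_distinct_elements)
  then have "2 * p + w = 2 * q + w"
    using rigid_center_pinned[OF adm c0_ab z0] by metis
  with \<open>p \<noteq> q\<close> show False
    by simp
qed

end

lemma extension_four_points:
  fixes F :: "complex set" and c :: "complex \<Rightarrow> bool"
  assumes "4 \<le> card F"
  shows "\<exists>c'. (\<forall>x. x \<notin> F \<longrightarrow> c' x = c x) \<and> distinguishing Gamma_tr_rot c'"
proof (rule ccontr)
  assume "\<not> ?thesis"
  then have rigid: "\<not> distinguishing Gamma_tr_rot c'" if "\<forall>x. x \<notin> F \<longrightarrow> c' x = c x" for c'
    using that by blast
  have "finite F"
    using assms card.infinite by force
  obtain p1 p2 where p12: "p1 \<in> F" "p2 \<in> F" "p1 \<noteq> p2"
    using two_distinct_elements[of F] assms by auto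
  obtain w where w: "w \<noteq> 0" "finite (jump c w)"
    using finite_jump_direction[OF \<open>finite F\<close> p12 rigid] by blast
  have "F \<noteq> {}"
    using p12(1) by blast
  then obtain a b where "extreme_in (- w) F a" and "extreme_in w F b"
    using extreme_exists[OF \<open>finite F\<close>] by metis
  then show False
    using rigid_configuration_impossible[OF assms rigid w] by blast
qed

lemma ext_good_four: "ext_good Gamma_tr_rot 4"
  unfolding ext_good_def prop_P_def
proof (intro allI impI)
  fix W :: "complex set" and c :: "complex \<Rightarrow> bool"
  assume "card_ge W 4 \<and> trivial_pointwise_stabilizer Gamma_tr_rot W"
  then have "infinite W \<or> 4 \<le> card W"
    by (simp add: card_ge_def)
  then obtain F where "F \<subseteq> W" and "4 \<le> card F"
    using infinite_arbitrarily_large[of W 4] by auto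
  then obtain c' where "\<forall>x. x \<notin> F \<longrightarrow> c' x = c x" and "distinguishing Gamma_tr_rot c'"
    using extension_four_points by blast
  then show "\<exists>c'. (\<forall>x. x \<notin> W \<longrightarrow> c' x = c x) \<and> distinguishing Gamma_tr_rot c'"
    using \<open>F \<subseteq> W\<close> by blast
qed

lemma sym_about_if_closed:
  assumes "\<And>x. x \<in> S \<Longrightarrow> 2 * z - x \<in> S"
  shows "sym_about z S"
  unfolding sym_about_def using assms[of "2 * z - _"] assms by force

lemma subset_of_three_symmetric:
  fixes S :: "complex set"
  assumes "S \<subseteq> {-1, 0, 1}" and "S \<noteq> {}"
  shows "\<exists>z. sym_about z S"
proof -
  have "\<exists>z. \<forall>x\<in>S. 2 * z - x \<in> S"
  proof (cases "-1 \<in> S"; cases "0 \<in> S"; cases "1 \<in> S")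
    assume "-1 \<in> S" "0 \<in> S" "1 \<notin> S"
    then show ?thesis using assms by (intro exI[of _ "-1/2"]) auto
  next
    assume "-1 \<notin> S" "0 \<in> S" "1 \<in> S"
    then show ?thesis using assms by (intro exI[of _ "1/2"]) auto
  next
    assume "-1 \<in> S" "0 \<notin> S" "1 \<notin> S"
    then show ?thesis using assms by (intro exI[of _ "-1"]) auto
  next
    assume "-1 \<notin> S" "0 \<notin> S" "1 \<in> S"
    then show ?thesis using assms by (intro exI[of _ 1]) auto
  qed (use assms in \<open>auto intro!: exI[of _ 0]\<close>)
  then show ?thesis using sym_about_if_closed by blast
qed

lemma not_ext_good_three: "\<not> ext_good Gamma_tr_rot 3"
proof
  assume good: "ext_good Gamma_tr_rot 3"
  define W :: "complex set" where "W = {-1, 0, 1}"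
  have "trivial_pointwise_stabilizer Gamma_tr_rot W"
    unfolding trivial_pointwise_stabilizer_def
  proof (intro ballI impI)
    fix g assume "g \<in> Gamma_tr_rot" and "\<forall>x\<in>W. g x = x"
    then have "g 0 = 0" and "g 1 = 1"
      by (simp_all add: W_def)
    from \<open>g \<in> Gamma_tr_rot\<close> obtain a where "g = (\<lambda>z. z + a) \<or> g = rotation a"
      by (auto simp: Gamma_tr_rot_def rotation_def)
    then show "g = id"
      using \<open>g 0 = 0\<close> \<open>g 1 = 1\<close> by (auto simp: rotation_def id_def)
  qed
  moreover have "card_ge W 3"
    by (simp add: card_ge_def W_def)
  ultimately have "prop_P Gamma_tr_rot W"
    using good by (simp add: ext_good_def)
  then have "\<exists>c. (\<forall>x. x \<notin> W \<longrightarrow> c x = True) \<and> distinguishing Gamma_tr_rot c"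
    unfolding prop_P_def by (rule spec[of _ "\<lambda>_. True", simplified])
  then obtain c where outside: "\<forall>x. x \<notin> W \<longrightarrow> c x = True"
    and dist: "distinguishing Gamma_tr_rot c"
    by blast
  define S where "S = {x. \<not> c x}"
  have "S \<subseteq> W"
    using outside by (auto simp: S_def)
  show False
  proof (cases "S = {}")
    case True
    then have "c \<circ> (\<lambda>z. z + 1) = c"
      by (auto simp: S_def fun_eq_iff)
    moreover have "(\<lambda>z::complex. z + 1) \<in> Gamma_tr_rot"
      by (auto simp: Gamma_tr_rot_def)
    moreover have "(\<lambda>z::complex. z + 1) \<noteq> id"
      by (auto simp: fun_eq_iff)
    ultimately show False
      using dist by (auto simp: distinguishing_def)
  next
    case False
    then obtain z where "sym_about z S"
      using subset_of_three_symmetric \<open>S \<subseteq> W\<close> unfolding W_def by blast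
    then have "c \<circ> rotation z = c"
      by (simp add: sym_about_def S_def rotation_def fun_eq_iff)
    then show False
      using dist rotation_in_Gamma rotation_not_id by (auto simp: distinguishing_def)
  qed
qed

lemma ext_good_mono:
  assumes "ext_good G m" and "m \<le> m'"
  shows "ext_good G m'"
  using assms by (auto simp: ext_good_def card_ge_def)

lemma ext_D_eqI:
  assumes "ext_good G (Suc n)" and "\<not> ext_good G n"
  shows "ext_D G = enat (Suc n)"
proof -
  have "(LEAST m. ext_good G m) = Suc n"
  proof (rule Least_equality)
    show "Suc n \<le> m" if "ext_good G m" for m
      using that assms(2) ext_good_mono[of G m n] by (meson not_less_eq_eq)
  qed (rule assms(1))
  then show ?thesis
    using assms(1) by (auto simp: ext_D_def)
qed

theorem lemma3p2:
  shows "ext_D Gamma_tr_rot = 4"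
  using ext_D_eqI[of Gamma_tr_rot 3] ext_good_four not_ext_good_three
  by (simp add: numeral_eq_enat)

end
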